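(* Let $T>0$ and $\epsilon>0$, and let $\mathcal{R}$ consist of $M$ independently generated random RR sets. For any node $u$ with $I_u\ge T$, with probability at least $1-\exp\!\left(-\frac{M\epsilon^2 n}{8T}\right)$ we have $n\,\mathcal{F_R}(u)\ge T-\frac{\epsilon n}{2}$.
   Context: $G=\langle V,E,w\rangle$ is a network with $n=|V|$ under the Linear Threshold or Independent Cascade model (given by its live-edge distribution: LT — each node $v$ independently selects at most one incoming live edge, $(u,v)$ with probability $w_{uv}/W_v$ where $W_v=w_v+\sum_{u}w_{uv}$ includes a self-weight $w_v$; IC — each edge $(u,v)$ is live independently with probability $w_{uv}$). The influence spread $I(S)$ is the expected number of nodes reachable from $S$ via live edges, and $I_u=I(\{u\})$. A random RR set is the set of nodes that can reach a uniformly random node $v\in V$ via live edges in a freshly sampled live-edge graph. $\mathcal{F_R}(u)$ is the fraction of RR sets in $\mathcal{R}$ that contain $u$. *)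

theory Defs
  imports "HOL-Probability.Probability"
begin

text \<open>Network: finite node set V, edge set E \<subseteq> V \<times> V, edge weights w (w u v = w_uv),
  self-weights ws (ws v = w_v, used by LT only). Live-edge graphs are edge sets.\<close>

definition reach :: "'a set \<Rightarrow> ('a \<times> 'a) set \<Rightarrow> 'a set \<Rightarrow> 'a set" where
  "reach V L S = {v \<in> V. \<exists>u\<in>S. (u, v) \<in> L\<^sup>*}"

definition IC_dist :: "('a \<times> 'a) set \<Rightarrow> ('a \<Rightarrow> 'a \<Rightarrow> real) \<Rightarrow> ('a \<times> 'a) set pmf" where
  "IC_dist E w = map_pmf (\<lambda>f. {e \<in> E. f e})
      (Pi_pmf E False (\<lambda>(u, v). bernoulli_pmf (w u v)))"

definition LT_W :: "('a \<times> 'a) set \<Rightarrow> ('a \<Rightarrow> 'a \<Rightarrow> real) \<Rightarrow> ('a \<Rightarrow> real) \<Rightarrow> 'a \<Rightarrow> real" where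
  "LT_W E w ws v = ws v + (\<Sum>u\<in>{u. (u, v) \<in> E}. w u v)"

text \<open>Choice of node v: Some u (incoming live edge (u,v)) w.p. w_uv / W_v, None w.p. w_v / W_v.\<close>
definition LT_choice :: "('a \<times> 'a) set \<Rightarrow> ('a \<Rightarrow> 'a \<Rightarrow> real) \<Rightarrow> ('a \<Rightarrow> real) \<Rightarrow> 'a \<Rightarrow> 'a option pmf" where
  "LT_choice E w ws v = embed_pmf (\<lambda>c. case c of
      None \<Rightarrow> ws v / LT_W E w ws v
    | Some u \<Rightarrow> (if (u, v) \<in> E then w u v / LT_W E w ws v else 0))"

definition LT_dist :: "'a set \<Rightarrow> ('a \<times> 'a) set \<Rightarrow> ('a \<Rightarrow> 'a \<Rightarrow> real) \<Rightarrow> ('a \<Rightarrow> real) \<Rightarrow> ('a \<times> 'a) set pmf" where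
  "LT_dist V E w ws = map_pmf (\<lambda>c. {(u, v). v \<in> V \<and> c v = Some u})
      (Pi_pmf V None (LT_choice E w ws))"

definition live_edge_model :: "'a set \<Rightarrow> ('a \<times> 'a) set \<Rightarrow> ('a \<Rightarrow> 'a \<Rightarrow> real) \<Rightarrow> ('a \<Rightarrow> real)
    \<Rightarrow> ('a \<times> 'a) set pmf \<Rightarrow> bool" where
  "live_edge_model V E w ws D \<longleftrightarrow>
     ((\<forall>(u, v)\<in>E. 0 \<le> w u v \<and> w u v \<le> 1) \<and> D = IC_dist E w) \<or>
     ((\<forall>(u, v)\<in>E. 0 \<le> w u v) \<and> (\<forall>v\<in>V. 0 \<le> ws v \<and> 0 < LT_W E w ws v) \<and> D = LT_dist V E w ws)"

definition influence :: "'a set \<Rightarrow> ('a \<times> 'a) set pmf \<Rightarrow> 'a set \<Rightarrow> real" where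
  "influence V D S = measure_pmf.expectation D (\<lambda>L. real (card (reach V L S)))"

definition RR_dist :: "'a set \<Rightarrow> ('a \<times> 'a) set pmf \<Rightarrow> 'a set pmf" where
  "RR_dist V D = do { v \<leftarrow> pmf_of_set V; L \<leftarrow> D; return_pmf {u \<in> V. (u, v) \<in> L\<^sup>*} }"

definition RR_collection :: "nat \<Rightarrow> 'a set \<Rightarrow> ('a \<times> 'a) set pmf \<Rightarrow> (nat \<Rightarrow> 'a set) pmf" where
  "RR_collection M V D = Pi_pmf {..<M} {} (\<lambda>_. RR_dist V D)"

definition frac_cover :: "nat \<Rightarrow> (nat \<Rightarrow> 'a set) \<Rightarrow> 'a \<Rightarrow> real" where
  "frac_cover M R u = real (card {i \<in> {..<M}. u \<in> R i}) / real M"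

end

theory Submission imports Defs begin

text \<open>
  A random RR set contains \<open>u\<close> exactly when \<open>u\<close> reaches the uniformly chosen target in the
  live-edge graph, so \<open>u\<close> lies in it with probability \<open>I\<^sub>u / n \<ge> T / n\<close>. Hence
  \<open>M \<cdot> \<F>\<^sub>\<R>(u)\<close> counts successes in \<open>M\<close> independent trials with success probability at
  least \<open>q = T / n\<close>, and the multiplicative Chernoff lower tail bounds the probability of
  falling below \<open>M (q - \<epsilon>/2)\<close> by \<open>exp (- M (\<epsilon>/2)\<^sup>2 / (2 q)) = exp (- M \<epsilon>\<^sup>2 n / (8 T))\<close>.
\<close>

lemma measure_pmf_prob_bind:
  "measure_pmf.prob (bind_pmf M N) X = measure_pmf.expectation M (\<lambda>x. measure_pmf.prob (N x) X)"
proof -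
  have "emeasure (bind_pmf M N) X = (\<integral>\<^sup>+x. emeasure (N x) X \<partial>M)"
    by (rule emeasure_bind_pmf)
  also have "\<dots> = (\<integral>\<^sup>+x. ennreal (measure_pmf.prob (N x) X) \<partial>M)"
    by (simp add: measure_pmf.emeasure_eq_measure)
  also have "\<dots> = ennreal (measure_pmf.expectation M (\<lambda>x. measure_pmf.prob (N x) X))"
    by (rule nn_integral_eq_integral) (auto intro!: measure_pmf.integrable_const_bound[where B=1])
  finally show ?thesis
    by (simp add: measure_pmf.emeasure_eq_measure ennreal_inj integral_nonneg)
qed

lemma prob_mem_RR_dist:
  assumes "finite V" "V \<noteq> {}" "u \<in> V"
  shows "measure_pmf.prob (RR_dist V D) {S. u \<in> S} = influence V D {u} / real (card V)"
proof -
  have reach_target: "measure_pmf.prob (D \<bind> (\<lambda>L. return_pmf {u \<in> V. (u, v) \<in> L\<^sup>*})) {S. u \<in> S}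
      = measure_pmf.prob D {L. (u, v) \<in> L\<^sup>*}" for v
  proof -
    have "measure_pmf.prob (D \<bind> (\<lambda>L. return_pmf {u \<in> V. (u, v) \<in> L\<^sup>*})) {S. u \<in> S}
        = measure_pmf.expectation D (\<lambda>L. indicator {L. (u, v) \<in> L\<^sup>*} L)"
      using assms(3) by (simp only: measure_pmf_prob_bind) (simp add: indicator_def)
    then show ?thesis by simp
  qed
  have "measure_pmf.prob (RR_dist V D) {S. u \<in> S}
      = (\<Sum>v\<in>V. measure_pmf.prob D {L. (u, v) \<in> L\<^sup>*}) / real (card V)"
    unfolding RR_dist_def using assms
    by (subst measure_pmf_prob_bind, simp only: reach_target) (simp add: integral_pmf_of_set)
  also have "(\<Sum>v\<in>V. measure_pmf.prob D {L. (u, v) \<in> L\<^sup>*})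
      = measure_pmf.expectation D (\<lambda>L. \<Sum>v\<in>V. indicator {L. (u, v) \<in> L\<^sup>*} L)"
    by (simp add: Bochner_Integration.integral_sum measure_pmf.integrable_const_bound[where B=1])
  also have "(\<lambda>L. \<Sum>v\<in>V. indicator {L. (u, v) \<in> L\<^sup>*} L :: real) = (\<lambda>L. real (card (reach V L {u})))"
    using assms(1) by (auto simp: reach_def indicator_def sum.If_cases Int_def intro!: ext)
  finally show ?thesis by (simp add: influence_def)
qed

lemma expectation_exp_neg_indicator:
  fixes Q :: "'b pmf"
  shows "measure_pmf.expectation Q (\<lambda>x. exp (- l * indicator A x))
       = 1 + (exp (- l) - 1) * measure_pmf.prob Q A"
proof -
  have "(\<lambda>x. exp (- l * indicator A x)) = (\<lambda>x. 1 + (exp (- l) - 1) * indicator A x)"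
    by (auto simp: indicator_def)
  moreover have "measure_pmf.expectation Q (\<lambda>x. 1 + (exp (- l) - 1) * indicator A x)
      = 1 + measure_pmf.expectation Q (\<lambda>x. (exp (- l) - 1) * indicator A x)"
    by (subst Bochner_Integration.integral_add)
       (auto intro!: measure_pmf.integrable_const_bound[where B=1] simp: indicator_def)
  ultimately show ?thesis by simp
qed

text \<open>Markov's inequality for \<open>exp (- l X)\<close>, whose expectation factorises over the
  independent coordinates.\<close>

lemma prob_count_less_Pi_pmf_mgf:
  fixes Q :: "'b pmf" and l c :: real
  assumes "l \<ge> 0"
  shows "measure_pmf.prob (Pi_pmf {..<M} d (\<lambda>_. Q)) {R. real (card {i\<in>{..<M}. R i \<in> A}) < c}
       \<le> exp (l * c) * (1 + (exp (- l) - 1) * measure_pmf.prob Q A) ^ M"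
proof -
  let ?P = "Pi_pmf {..<M} d (\<lambda>_. Q)"
  let ?X = "\<lambda>R. real (card {i\<in>{..<M}. R i \<in> A})"
  let ?g = "\<lambda>x. exp (- l * indicator A x) :: real"
  have exp_count: "exp (- l * ?X R) = (\<Prod>i<M. ?g (R i))" for R
  proof -
    have "?X R = (\<Sum>i<M. indicator A (R i))"
      by (simp add: indicator_def sum.If_cases Int_def)
    then show ?thesis by (simp add: sum_distrib_left exp_sum)
  qed
  have g_bounded: "integrable (measure_pmf Q) ?g"
    using assms by (auto intro!: measure_pmf.integrable_const_bound[where B=1] simp: indicator_def)
  have markov: "indicator {R. ?X R < c} R \<le> exp (l * c) * (\<Prod>i<M. ?g (R i))" for R
  proof (cases "?X R < c")
    case True
    then have "l * ?X R \<le> l * c" using assms by (intro mult_left_mono) auto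
    then have "1 \<le> exp (l * c) * exp (- l * ?X R)"
      by (simp flip: exp_add)
    with True show ?thesis unfolding exp_count by simp
  qed (simp add: prod_nonneg)
  have "measure_pmf.prob ?P {R. ?X R < c} = measure_pmf.expectation ?P (indicator {R. ?X R < c})"
    by simp
  also have "\<dots> \<le> measure_pmf.expectation ?P (\<lambda>R. exp (l * c) * (\<Prod>i<M. ?g (R i)))"
    using g_bounded markov
    by (intro integral_mono integrable_mult_right integrable_prod_Pi_pmf)
       (auto intro!: measure_pmf.integrable_const_bound[where B=1])
  also have "\<dots> = exp (l * c) * (\<Prod>i<M. measure_pmf.expectation Q ?g)"
    by (subst integral_mult_right_zero, subst expectation_prod_Pi_pmf) (use g_bounded in auto)
  also have "measure_pmf.expectation Q ?g = 1 + (exp (- l) - 1) * measure_pmf.prob Q A"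
    by (rule expectation_exp_neg_indicator)
  finally show ?thesis by simp
qed

lemma one_plus_power_le_exp:
  fixes x :: real
  assumes "x \<ge> -1"
  shows "(1 + x) ^ n \<le> exp (real n * x)"
proof -
  have "(1 + x) ^ n \<le> exp x ^ n"
    using assms by (intro power_mono exp_ge_add_one_self) auto
  then show ?thesis by (simp add: exp_of_nat_mult)
qed

lemma exp_neg_le_quadratic:
  fixes l :: real
  assumes "l \<ge> 0"
  shows "exp (- l) \<le> 1 - l + l\<^sup>2 / 2"
proof -
  obtain t where "exp (- l) = (\<Sum>m<3. (- l) ^ m / fact m) + exp t / fact 3 * (- l) ^ 3"
    using Maclaurin_exp_le[of "- l" 3] by blast
  moreover have "(\<Sum>m<3. (- l) ^ m / fact m) = 1 - l + l\<^sup>2 / 2"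
    by (simp add: eval_nat_numeral)
  moreover have "exp t / fact 3 * (- l) ^ 3 \<le> 0"
    using assms by (intro mult_nonneg_nonpos) (auto simp: power_odd_eq)
  ultimately show ?thesis by linarith
qed

text \<open>Multiplicative Chernoff lower tail, relative to a lower bound \<open>q\<close> of the success
  probability; the exponent \<open>l = \<delta> / q\<close> is the optimal one for \<open>p = q\<close>.\<close>

lemma prob_count_less_Pi_pmf_chernoff:
  fixes Q :: "'b pmf" and q \<delta> :: real
  assumes "0 < q" "q \<le> measure_pmf.prob Q A" "0 \<le> \<delta>"
  shows "measure_pmf.prob (Pi_pmf {..<M} d (\<lambda>_. Q))
           {R. real (card {i\<in>{..<M}. R i \<in> A}) < real M * (q - \<delta>)}
       \<le> exp (- (real M * \<delta>\<^sup>2 / (2 * q)))"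
proof (cases "\<delta> < q")
  case False
  then have "real M * (q - \<delta>) \<le> 0"
    by (simp add: mult_nonneg_nonpos)
  then have "{R. real (card {i\<in>{..<M}. R i \<in> A}) < real M * (q - \<delta>)} = {}"
    by auto
  then show ?thesis by simp
next
  case True
  define p where "p = measure_pmf.prob Q A"
  define l where "l = \<delta> / q"
  have l: "0 \<le> l" "l \<le> 1" using assms True by (auto simp: l_def)
  have "-1 \<le> (exp (- l) - 1) * p"
  proof -
    have "exp (- l) - 1 \<le> (exp (- l) - 1) * p"
      using mult_left_mono_neg[of p 1 "exp (- l) - 1"] l by (auto simp: p_def)
    then show ?thesis by (smt (verit) exp_gt_zero)
  qed
  then have power_le: "(1 + (exp (- l) - 1) * p) ^ M \<le> exp (real M * ((exp (- l) - 1) * p))"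
    by (rule one_plus_power_le_exp)
  have "(exp (- l) - 1) * p \<le> (- l + l\<^sup>2 / 2) * p"
    using exp_neg_le_quadratic[OF l(1)] by (intro mult_right_mono) (auto simp: p_def)
  also have "\<dots> \<le> (- l + l\<^sup>2 / 2) * q"
  proof (rule mult_left_mono_neg)
    have "l\<^sup>2 \<le> l" using l by (simp add: power2_eq_square mult_left_le)
    then show "- l + l\<^sup>2 / 2 \<le> 0" using l by simp
  qed (use assms(2) in \<open>simp add: p_def\<close>)
  finally have exponent_le: "(exp (- l) - 1) * p \<le> (- l + l\<^sup>2 / 2) * q" .
  have "measure_pmf.prob (Pi_pmf {..<M} d (\<lambda>_. Q))
           {R. real (card {i\<in>{..<M}. R i \<in> A}) < real M * (q - \<delta>)}
      \<le> exp (l * (real M * (q - \<delta>))) * (1 + (exp (- l) - 1) * p) ^ M"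
    unfolding p_def by (rule prob_count_less_Pi_pmf_mgf[OF l(1)])
  also have "\<dots> \<le> exp (l * (real M * (q - \<delta>))) * exp (real M * ((exp (- l) - 1) * p))"
    using power_le by simp
  also have "\<dots> = exp (real M * (l * (q - \<delta>) + (exp (- l) - 1) * p))"
    by (simp flip: exp_add add: algebra_simps)
  also have "\<dots> \<le> exp (real M * (l * (q - \<delta>) + (- l + l\<^sup>2 / 2) * q))"
    using exponent_le by (simp add: mult_left_mono)
  also have "l * (q - \<delta>) + (- l + l\<^sup>2 / 2) * q = - (\<delta>\<^sup>2 / (2 * q))"
    using assms(1) by (simp add: l_def field_simps power2_eq_square)
  finally show ?thesis by simp
qed

theorem lemma5p1:
  fixes V :: "'a set" and E :: "('a \<times> 'a) set" and w :: "'a \<Rightarrow> 'a \<Rightarrow> real"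
    and ws :: "'a \<Rightarrow> real" and D :: "('a \<times> 'a) set pmf"
    and M :: nat and T \<epsilon> :: real and u :: 'a
  assumes "finite V" and "V \<noteq> {}" and "E \<subseteq> V \<times> V"
    and "live_edge_model V E w ws D"
    and "T > 0" and "\<epsilon> > 0"
    and "u \<in> V" and "influence V D {u} \<ge> T"
  shows "measure_pmf.prob (RR_collection M V D)
           {R. real (card V) * frac_cover M R u \<ge> T - \<epsilon> * real (card V) / 2}
         \<ge> 1 - exp (- (real M * \<epsilon>^2 * real (card V)) / (8 * T))"
proof (cases "M = 0")
  case False
  define n where "n = real (card V)"
  define q where "q = T / n"
  define B where "B = {R. real (card {i\<in>{..<M}. R i \<in> {S. u \<in> S}}) < real M * (q - \<epsilon> / 2)}"
  have n: "0 < n" using assms(1,2) by (simp add: n_def card_gt_0_iff)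
  have q: "0 < q" "q \<le> measure_pmf.prob (RR_dist V D) {S. u \<in> S}"
    using n assms(5,8) prob_mem_RR_dist[OF assms(1,2,7)] by (auto simp: q_def n_def divide_right_mono)
  have "{R. n * frac_cover M R u \<ge> T - \<epsilon> * n / 2} = UNIV - B"
    using False n by (auto simp: B_def q_def frac_cover_def field_simps)
  then have "measure_pmf.prob (RR_collection M V D) {R. n * frac_cover M R u \<ge> T - \<epsilon> * n / 2}
      = 1 - measure_pmf.prob (RR_collection M V D) B"
    using measure_pmf.prob_compl[of B "RR_collection M V D"] by simp
  moreover have "measure_pmf.prob (RR_collection M V D) B \<le> exp (- (real M * (\<epsilon> / 2)\<^sup>2 / (2 * q)))"
    unfolding B_def RR_collection_def using q assms(6)
    by (intro prob_count_less_Pi_pmf_chernoff) auto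
  moreover have "real M * (\<epsilon> / 2)\<^sup>2 / (2 * q) = real M * \<epsilon>\<^sup>2 * n / (8 * T)"
    using n assms(5) by (simp add: q_def field_simps power2_eq_square)
  ultimately show ?thesis by (simp add: n_def)
qed simp

end
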